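(* Let $P$ be a poset, equipped with its order topology, such that (i) every element of $P$ has finite height, and (ii) every down-equivalence class of $P$ is countable. Then any two elements of $\mathrm{Homeo}(P)$ are isotopic if and only if they are equal.
   Context: The order topology on a poset $P$ declares the lower sets open, where $S\subseteq P$ is a lower set if $a\le b$ and $b\in S$ imply $a\in S$; continuous maps are exactly order-preserving maps. A chain of length $n$ is a sequence of distinct points $a_0<a_1<\cdots<a_n$ in $P$. The height of $a\in P$ is $\mathrm{Ht}(a)=\sup\{n\in\mathbb{N}\cup\{\infty\}:\exists\, a_0<\cdots<a_n=a\}$. Two elements $a,a'\in P$ are down-equivalent if for all $b\in P$, $b<a$ iff $b<a'$; this is an equivalence relation. $\mathrm{Homeo}(P)$ is the group of homeomorphisms of $P$; two homeomorphisms $f,g$ are isotopic if there is a continuous $H:P\times[0,1]\to P$ with each $H_t=H(\cdot,t)$ a homeomorphism, $H_0=f$, $H_1=g$. *)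

theory Defs
  imports "HOL-Analysis.Analysis" "HOL-Library.Extended_Nat" "HOL-Library.Countable_Set"
begin

definition lower_set :: "'a::order set \<Rightarrow> bool" where
  "lower_set S \<longleftrightarrow> (\<forall>a b. a \<le> b \<longrightarrow> b \<in> S \<longrightarrow> a \<in> S)"

lemma istopology_lower_set: "istopology lower_set"
  unfolding istopology_def lower_set_def by blast

definition poset_topology :: "'a::order topology" where
  "poset_topology = topology lower_set"

lemma openin_poset_topology: "openin poset_topology S \<longleftrightarrow> lower_set S"
  unfolding poset_topology_def using istopology_lower_set by (metis topology_inverse')

definition chain_ending_at :: "'a::order \<Rightarrow> nat \<Rightarrow> bool" where
  "chain_ending_at a n \<longleftrightarrow> (\<exists>c :: nat \<Rightarrow> 'a. (\<forall>i<n. c i < c (Suc i)) \<and> c n = a)"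

definition Ht :: "'a::order \<Rightarrow> enat" where
  "Ht a = Sup {enat n | n. chain_ending_at a n}"

definition down_equiv :: "'a::order \<Rightarrow> 'a \<Rightarrow> bool" where
  "down_equiv a a' \<longleftrightarrow> (\<forall>b. b < a \<longleftrightarrow> b < a')"

definition isotopic :: "('a::order \<Rightarrow> 'a) \<Rightarrow> ('a \<Rightarrow> 'a) \<Rightarrow> bool" where
  "isotopic f g \<longleftrightarrow> (\<exists>H :: 'a \<times> real \<Rightarrow> 'a.
      continuous_map (prod_topology poset_topology (top_of_set {0..1})) poset_topology H
    \<and> (\<forall>t\<in>{0..1}. homeomorphic_map poset_topology poset_topology (\<lambda>x. H (x, t)))
    \<and> (\<forall>x. H (x, 0) = f x) \<and> (\<forall>x. H (x, 1) = g x))"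

end

theory Submission
  imports Defs
begin

text \<open>
  Homeomorphisms of a poset preserve height. Along an isotopy \<open>H\<close>, the track
  \<open>t \<mapsto> H (x, t)\<close> therefore stays among points of height \<open>Ht x\<close>, and when this height
  is finite these points form an antichain, since height strictly increases along \<open><\<close>.
  The preimage of the open set \<open>{z. z \<le> H (x, s)}\<close> under the track is then exactly the
  fibre over \<open>H (x, s)\<close>, so the track is locally constant, hence constant on the
  connected interval \<open>[0, 1]\<close>: isotopic homeomorphisms coincide.
\<close>

lemma topspace_poset_topology [simp]: "topspace (poset_topology :: 'a::order topology) = UNIV"
  by (metis openin_poset_topology openin_subset lower_set_def UNIV_I subset_antisym subsetI)

lemma openin_continuous_map_preimage_atMost:
  assumes "continuous_map X poset_topology h"
  shows "openin X {x \<in> topspace X. h x \<le> (c::'a::order)}"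
proof -
  have "lower_set {z. z \<le> c}" unfolding lower_set_def by auto
  then show ?thesis
    using assms unfolding continuous_map_def openin_poset_topology by auto
qed

lemma continuous_map_poset_topology_imp_mono:
  assumes "continuous_map poset_topology poset_topology (h :: 'a::order \<Rightarrow> 'b::order)"
  shows "mono h"
proof
  fix x y :: 'a assume "x \<le> y"
  have "lower_set {x. h x \<le> h y}"
    using openin_continuous_map_preimage_atMost[OF assms, of "h y"]
    by (simp add: openin_poset_topology)
  with \<open>x \<le> y\<close> show "h x \<le> h y" unfolding lower_set_def by blast
qed

lemma homeomorphic_map_poset_topology_imp_strict_mono:
  assumes "homeomorphic_map poset_topology poset_topology (h :: 'a::order \<Rightarrow> 'b::order)"
  shows "strict_mono h"
proof -
  have "mono h"
    using assms by (intro continuous_map_poset_topology_imp_mono homeomorphic_imp_continuous_map)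
  moreover have "inj h"
    using homeomorphic_imp_injective_map[OF assms] by simp
  ultimately show ?thesis
    by (simp add: strict_mono_def monoD inj_eq order_less_le)
qed

lemma chain_ending_at_strict_mono:
  assumes "strict_mono (h :: 'a::order \<Rightarrow> 'b::order)" "chain_ending_at a n"
  shows "chain_ending_at (h a) n"
proof -
  obtain c where "\<forall>i<n. c i < c (Suc i)" "c n = a"
    using assms(2) unfolding chain_ending_at_def by blast
  with assms(1) show ?thesis
    unfolding chain_ending_at_def strict_mono_def by (intro exI[of _ "h \<circ> c"]) auto
qed

lemma Ht_homeomorphic_map:
  assumes "homeomorphic_map poset_topology poset_topology (h :: 'a::order \<Rightarrow> 'b::order)"
  shows "Ht (h a) = Ht a"
proof -
  obtain k where "homeomorphic_maps poset_topology poset_topology h k"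
    using assms by (auto simp: homeomorphic_map_maps)
  then have k: "homeomorphic_map poset_topology poset_topology k" "\<And>x. k (h x) = x"
    unfolding homeomorphic_maps_map by auto
  have "chain_ending_at (h a) n \<longleftrightarrow> chain_ending_at a n" for n
    using chain_ending_at_strict_mono[OF homeomorphic_map_poset_topology_imp_strict_mono[OF assms]]
      chain_ending_at_strict_mono[OF homeomorphic_map_poset_topology_imp_strict_mono[OF k(1)],
        of "h a" n] k(2)
    by auto
  then show ?thesis unfolding Ht_def by simp
qed

lemma Ht_strict_mono:
  fixes a b :: "'a::order"
  assumes "a < b" "Ht a \<noteq> \<infinity>"
  shows "Ht a < Ht b"
proof -
  let ?S = "{enat n | n. chain_ending_at a n}"
  have nonempty: "?S \<noteq> {}"
    unfolding chain_ending_at_def by (auto intro!: exI[of _ 0])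
  have finite: "finite ?S"
    using assms(2) nonempty unfolding Ht_def Sup_enat_def by (auto split: if_splits)
  have "Ht a = Max ?S"
    using finite nonempty unfolding Ht_def Sup_enat_def by auto
  moreover have "Max ?S \<in> ?S"
    using finite nonempty by (rule Max_in)
  ultimately obtain n where n: "Ht a = enat n" "chain_ending_at a n" by auto
  then obtain c where c: "\<forall>i<n. c i < c (Suc i)" "c n = a"
    unfolding chain_ending_at_def by blast
  have "chain_ending_at b (Suc n)"
    unfolding chain_ending_at_def using c assms(1)
    by (intro exI[of _ "\<lambda>i. if i \<le> n then c i else b"])
       (auto simp: less_Suc_eq_le, metis Suc_leI le_neq_implies_less)
  then have "enat (Suc n) \<le> Ht b"
    unfolding Ht_def by (intro Sup_upper) blast
  with n(1) show ?thesis by (metis Suc_ile_eq)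
qed

lemma continuous_map_poset_topology_constant_on_antichain:
  assumes "connected S"
    and cont: "continuous_map (top_of_set S) poset_topology (\<gamma> :: 'b::topological_space \<Rightarrow> 'a::order)"
    and antichain: "\<And>s t. s \<in> S \<Longrightarrow> t \<in> S \<Longrightarrow> \<gamma> t \<le> \<gamma> s \<Longrightarrow> \<gamma> t = \<gamma> s"
  shows "\<gamma> constant_on S"
  using \<open>connected S\<close>
proof (rule locally_constant_imp_constant)
  fix s assume "s \<in> S"
  show "\<exists>T. openin (top_of_set S) T \<and> s \<in> T \<and> (\<forall>t\<in>T. \<gamma> t = \<gamma> s)"
    using openin_continuous_map_preimage_atMost[OF cont, of "\<gamma> s"] \<open>s \<in> S\<close> antichain
    by (intro exI[of _ "{t \<in> S. \<gamma> t \<le> \<gamma> s}"]) auto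
qed

lemma isotopic_refl:
  assumes "homeomorphic_map poset_topology poset_topology (f :: 'a::order \<Rightarrow> 'a)"
  shows "isotopic f f"
proof -
  have "continuous_map (prod_topology poset_topology (top_of_set {0..1})) poset_topology
          (\<lambda>p. f (fst p))"
    using continuous_map_compose[OF continuous_map_fst homeomorphic_imp_continuous_map[OF assms]]
    by (simp add: o_def)
  with assms show ?thesis
    unfolding isotopic_def by (intro exI[of _ "\<lambda>p. f (fst p)"]) simp
qed

lemma isotopic_imp_eq:
  fixes f g :: "'a::order \<Rightarrow> 'a"
  assumes finite_height: "\<And>a::'a. Ht a \<noteq> \<infinity>" and "isotopic f g"
  shows "f = g"
proof
  fix x
  obtain H :: "'a \<times> real \<Rightarrow> 'a" where
      cont: "continuous_map (prod_topology poset_topology (top_of_set {0..1})) poset_topology H"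
    and homeo: "\<forall>t\<in>{0..1}. homeomorphic_map poset_topology poset_topology (\<lambda>x. H (x, t))"
    and ends: "\<forall>x. H (x, 0) = f x" "\<forall>x. H (x, 1) = g x"
    using \<open>isotopic f g\<close> unfolding isotopic_def by blast
  define \<gamma> where "\<gamma> t = H (x, t)" for t
  have "continuous_map (top_of_set {0..1}) poset_topology \<gamma>"
    unfolding \<gamma>_def
    by (rule continuous_map_compose[OF _ cont, unfolded o_def])
       (intro continuous_map_pairedI continuous_map_id continuous_map_const[THEN iffD2]; simp)
  moreover have Ht_track: "Ht (\<gamma> t) = Ht x" if "t \<in> {0..1}" for t
    using Ht_homeomorphic_map[OF homeo[rule_format, OF that]] unfolding \<gamma>_def by simp
  have "\<gamma> t = \<gamma> s" if "s \<in> {0..1}" "t \<in> {0..1}" "\<gamma> t \<le> \<gamma> s" for s t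
    using Ht_strict_mono[of "\<gamma> t" "\<gamma> s"] finite_height Ht_track that
    by (metis order_less_irrefl order_less_le)
  ultimately have "\<gamma> constant_on {0..1}"
    by (intro continuous_map_poset_topology_constant_on_antichain) auto
  then have "\<gamma> 0 = \<gamma> 1" by (auto simp: constant_on_def)
  with ends show "f x = g x" unfolding \<gamma>_def by simp
qed

theorem theorem3p3:
  fixes f g :: "'a::order \<Rightarrow> 'a"
  assumes finite_height: "\<And>a::'a. Ht a \<noteq> \<infinity>"
    and countable_classes: "\<And>a::'a. countable {a'. down_equiv a a'}"
    and f: "homeomorphic_map poset_topology poset_topology f"
    and g: "homeomorphic_map poset_topology poset_topology g"
  shows "isotopic f g \<longleftrightarrow> f = g"
  using isotopic_imp_eq[OF finite_height] isotopic_refl[OF f] by blast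

end
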